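(* Let $n,x$ be integers with $1<x<n$, so that $G=C_{2n}(x,1,n)$ is a $5$-regular circulant graph. If $n\equiv x\equiv 2 \pmod 3$, then $G$ is word-representable.
   Context: Two distinct letters $x,y$ alternate in a word $w$ if, after deleting all other letters from $w$, the resulting word is of the form $xyxy\cdots$ or $yxyx\cdots$ (of even or odd length). A graph $G=(V,E)$ is word-representable if there is a word $w$ over the alphabet $V$, containing every letter of $V$ at least once, such that for all distinct $x,y\in V$, $xy\in E$ if and only if $x$ and $y$ alternate in $w$. For an integer $m$ and a set $R$ of positive integers each at most $m/2$, the circulant graph $C_m(R)$ has vertex set $\{0,1,\dots,m-1\}$, with $i$ and $j$ adjacent iff $\min(|i-j|,\,m-|i-j|)\in R$. $C_{2n}(x,1,n)$ denotes the circulant graph on $2n$ vertices with jump set $\{1,x,n\}$; it is $5$-regular exactly when $1<x<n$. *)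

theory Defs
  imports Main
begin

definition alternate :: "'a \<Rightarrow> 'a \<Rightarrow> 'a list \<Rightarrow> bool" where
  "alternate x y w \<longleftrightarrow>
     (let u = filter (\<lambda>z. z = x \<or> z = y) w in
      \<forall>i. Suc i < length u \<longrightarrow> u ! i \<noteq> u ! Suc i)"

definition word_representable :: "'a set \<Rightarrow> ('a \<Rightarrow> 'a \<Rightarrow> bool) \<Rightarrow> bool" where
  "word_representable V E \<longleftrightarrow>
     (\<exists>w. set w = V \<and>
        (\<forall>x\<in>V. \<forall>y\<in>V. x \<noteq> y \<longrightarrow> (E x y \<longleftrightarrow> alternate x y w)))"

definition circ_dist :: "nat \<Rightarrow> nat \<Rightarrow> nat \<Rightarrow> nat" where
  "circ_dist m i j = (let d = (if i \<le> j then j - i else i - j) in min d (m - d))"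

definition circulant_adj :: "nat \<Rightarrow> nat set \<Rightarrow> nat \<Rightarrow> nat \<Rightarrow> bool" where
  "circulant_adj m R i j \<longleftrightarrow> i < m \<and> j < m \<and> i \<noteq> j \<and> circ_dist m i j \<in> R"

end

theory Submission
  imports Defs "HOL-Library.Product_Lexorder"
begin

(* A graph is word-representable as soon as it has a semi-transitive orientation
   (Halldorsson, Kitaev and Pyatkin).  We orient every edge towards the larger colour of a
   proper colouring h and write the word down explicitly.  It is a concatenation of pieces;
   a piece for two vertex sets A and C lists, each in the order of (h z, z), the vertices in A,
   in C, outside A and outside C.  If A and C are closed under predecessors, C is contained in A and A contains the
   out-neighbours of C, then every arc u \<rightarrow> v restricts to u v u v in the piece; choosing A
   and C from the ancestors of a vertex produces a repeated letter for every non-adjacent pair.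

   For C_2n(1, x, n) with n and x congruent to 2 mod 3 the colouring is i mod 3, except that vertex 2n-1
   gets a fourth colour.  The jumps 1, x, n, 2n-x are all nonzero mod 3, so the colouring is
   proper, and a directed path has at most three arcs.  A path through all four colours ending
   at 2n-1 must end with 2n-3 \<rightarrow> 2n-2 \<rightarrow> 2n-1, and a chord to 2n-1 from colour 0 can only
   start at 0, which is not adjacent to 2n-3. *)

lemma alternate_iff_successively:
  "alternate x y w \<longleftrightarrow> successively (\<noteq>) (filter (\<lambda>z. z = x \<or> z = y) w)"
  unfolding alternate_def Let_def successively_conv_nth ..

lemma alternate_commute: "alternate x y w \<longleftrightarrow> alternate y x w"
  unfolding alternate_def by (simp add: disj_commute)

lemma successively_concat_map_const:
  assumes "successively P B" and "B \<noteq> [] \<Longrightarrow> P (last B) (hd B)"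
  shows "successively P (concat (map (\<lambda>_. B) xs))"
proof (induction xs)
  case (Cons y ys)
  then show ?case
    using assms by (cases ys) (auto simp: successively_append_iff hd_append)
qed simp

lemma successively_concat_member:
  assumes "successively P (concat xss)" and "xs \<in> set xss"
  shows "successively P xs"
proof -
  obtain ys zs where "xss = ys @ xs # zs"
    using split_list[OF assms(2)] by blast
  with assms(1) show ?thesis
    by (simp add: successively_append_iff)
qed

definition colour_orientation :: "('a \<Rightarrow> 'a \<Rightarrow> bool) \<Rightarrow> ('a \<Rightarrow> 'b::order) \<Rightarrow> 'a \<Rightarrow> 'a \<Rightarrow> bool" where
  "colour_orientation E h u v \<longleftrightarrow> E u v \<and> h u < h v"

(* For an acyclic orientation this is semi-transitivity: the vertices of a directed path whose
   ends are joined by an arc induce a transitive tournament. *)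
definition shortcut_free :: "('a \<Rightarrow> 'a \<Rightarrow> bool) \<Rightarrow> bool" where
  "shortcut_free R \<longleftrightarrow>
     (\<forall>w a b v. R\<^sup>*\<^sup>* w a \<longrightarrow> R\<^sup>*\<^sup>* a b \<longrightarrow> R\<^sup>*\<^sup>* b v \<longrightarrow> R w v \<longrightarrow> a = b \<or> R a b)"

lemma rtranclp_increasing:
  fixes h :: "'a \<Rightarrow> 'b::order"
  assumes "\<And>u v. R u v \<Longrightarrow> h u < h v" and "R\<^sup>*\<^sup>* u v"
  shows "u = v \<or> h u < h v"
  using assms(2) by (induction rule: rtranclp_induct) (auto dest: assms(1) intro: less_trans)

definition vertex_order :: "'a::linorder set \<Rightarrow> ('a \<Rightarrow> 'b::linorder) \<Rightarrow> 'a list" where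
  "vertex_order V h = sort_key (\<lambda>z. (h z, z)) (sorted_list_of_set V)"

lemma set_vertex_order: "finite V \<Longrightarrow> set (vertex_order V h) = V"
  by (simp add: vertex_order_def)

lemma filter_pair_vertex_order:
  assumes "finite V" "u \<in> V" "v \<in> V" "(h u, u) < (h v, v)"
  shows "filter (\<lambda>z. z = u \<or> z = v) (vertex_order V h) = [u, v]"
proof (rule map_sorted_distinct_set_unique[where f = "\<lambda>z. (h z, z)"])
  show "sorted (map (\<lambda>z. (h z, z)) (filter (\<lambda>z. z = u \<or> z = v) (vertex_order V h)))"
    unfolding vertex_order_def by (rule sorted_filter) (rule sorted_sort_key)
  show "distinct (map (\<lambda>z. (h z, z)) (filter (\<lambda>z. z = u \<or> z = v) (vertex_order V h)))"
    by (simp add: distinct_map inj_on_def vertex_order_def)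
qed (use assms in \<open>auto simp: inj_on_def set_vertex_order\<close>)

definition piece ::
  "'a::linorder set \<Rightarrow> ('a \<Rightarrow> 'b::linorder) \<Rightarrow> 'a set \<Rightarrow> 'a set \<Rightarrow> 'a list" where
  "piece V h A C = (let vs = vertex_order V h in
     filter (\<lambda>z. z \<in> A) vs @ filter (\<lambda>z. z \<in> C) vs @
     filter (\<lambda>z. z \<notin> A) vs @ filter (\<lambda>z. z \<notin> C) vs)"

lemma set_piece: "finite V \<Longrightarrow> set (piece V h A C) = V"
  by (auto simp: piece_def Let_def set_vertex_order)

lemma filter_pair_piece:
  assumes "finite V" "u \<in> V" "v \<in> V" "(h u, u) < (h v, v)"
  shows "filter (\<lambda>z. z = u \<or> z = v) (piece V h A C) =
    filter (\<lambda>z. z \<in> A) [u, v] @ filter (\<lambda>z. z \<in> C) [u, v] @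
    filter (\<lambda>z. z \<notin> A) [u, v] @ filter (\<lambda>z. z \<notin> C) [u, v]"
proof -
  have "filter (\<lambda>z. z = u \<or> z = v) (filter S (vertex_order V h)) = filter S [u, v]" for S
  proof -
    have "filter (\<lambda>z. z = u \<or> z = v) (filter S (vertex_order V h)) =
        filter S (filter (\<lambda>z. z = u \<or> z = v) (vertex_order V h))"
      by (simp add: conj_commute)
    then show ?thesis
      by (simp only: filter_pair_vertex_order[OF assms])
  qed
  then show ?thesis
    by (simp add: piece_def Let_def)
qed

lemma filter_pair_piece_arc:
  assumes "finite V" "u \<in> V" "v \<in> V" "(h u, u) < (h v, v)"
    and "v \<in> A \<Longrightarrow> u \<in> A" "v \<in> C \<Longrightarrow> u \<in> C" "u \<in> C \<Longrightarrow> u \<in> A" "u \<in> C \<Longrightarrow> v \<in> A"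
  shows "filter (\<lambda>z. z = u \<or> z = v) (piece V h A C) = [u, v, u, v]"
  using assms(5-8) unfolding filter_pair_piece[OF assms(1-4)] by auto

definition ancestors :: "('a \<Rightarrow> 'a \<Rightarrow> bool) \<Rightarrow> 'a set \<Rightarrow> 'a set" where
  "ancestors R S = {u. \<exists>y\<in>S. R\<^sup>*\<^sup>* u y}"

(* For non-adjacent a, b with (h a, a) < (h b, b): if a reaches b, the first piece of the
   block of a restricts to a a b b (shortcut-freeness keeps b out of its first set); otherwise
   the second piece of the block of b restricts to a b b a. *)
definition vertex_block ::
  "'a::linorder set \<Rightarrow> ('a \<Rightarrow> 'b::linorder) \<Rightarrow> ('a \<Rightarrow> 'a \<Rightarrow> bool) \<Rightarrow> 'a \<Rightarrow> 'a list" where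
  "vertex_block V h R x = (let S = ancestors R {x} in
     piece V h (ancestors R {y. \<exists>w\<in>S. R\<^sup>=\<^sup>= w y}) S @ piece V h UNIV S)"

lemma subset_ancestors: "S \<subseteq> ancestors R S"
  by (auto simp: ancestors_def)

lemma ancestors_arc: "R u v \<Longrightarrow> v \<in> ancestors R S \<Longrightarrow> u \<in> ancestors R S"
  unfolding ancestors_def by (blast intro: converse_rtranclp_into_rtranclp)

lemma filter_pair_vertex_block_arc:
  assumes "finite V" "u \<in> V" "v \<in> V" "(h u, u) < (h v, v)" and "R u v"
  shows "filter (\<lambda>z. z = u \<or> z = v) (vertex_block V h R x) = [u, v, u, v, u, v, u, v]"
proof -
  let ?S = "ancestors R {x}"
  let ?A = "ancestors R {y. \<exists>w\<in>?S. R\<^sup>=\<^sup>= w y}"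
  have down: "v \<in> ancestors R T \<Longrightarrow> u \<in> ancestors R T" for T
    by (rule ancestors_arc[where R = R, OF assms(5)])
  have "u \<in> ?A" and "v \<in> ?A" if "u \<in> ?S"
    using that assms(5) subset_ancestors[of "{y. \<exists>w\<in>?S. R\<^sup>=\<^sup>= w y}" R] by auto
  then have "filter (\<lambda>z. z = u \<or> z = v) (piece V h ?A ?S) = [u, v, u, v]"
    using down by (intro filter_pair_piece_arc[OF assms(1-4)])
  moreover have "filter (\<lambda>z. z = u \<or> z = v) (piece V h UNIV ?S) = [u, v, u, v]"
    using down by (intro filter_pair_piece_arc[OF assms(1-4)]) simp_all
  ultimately show ?thesis
    by (simp add: vertex_block_def Let_def)
qed

lemma not_successively_vertex_block:
  assumes "finite V" "a \<in> V" "b \<in> V" "(h a, a) < (h b, b)" and "\<not> R a b"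
    and increasing: "\<And>u v. R u v \<Longrightarrow> h u < h v" and "shortcut_free R"
  shows "\<not> successively (\<noteq>) (filter (\<lambda>z. z = a \<or> z = b) (vertex_block V h R a)) \<or>
    \<not> successively (\<noteq>) (filter (\<lambda>z. z = a \<or> z = b) (vertex_block V h R b))"
proof -
  have "a \<noteq> b" and "h a \<le> h b"
    using assms(4) by auto
  have not_ba: "b \<notin> ancestors R {a}"
    using rtranclp_increasing[of R h b a] increasing \<open>a \<noteq> b\<close> \<open>h a \<le> h b\<close>
    unfolding ancestors_def by auto
  have a_a: "a \<in> ancestors R {a}"
    by (simp add: ancestors_def)
  show ?thesis
  proof (cases "a \<in> ancestors R {b}")
    case True
    let ?A = "ancestors R {y. \<exists>w\<in>ancestors R {a}. R\<^sup>=\<^sup>= w y}"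
    have "b \<notin> ?A"
    proof
      assume "b \<in> ?A"
      then obtain w y where w_a: "R\<^sup>*\<^sup>* w a" and "w = y \<or> R w y" and b_y: "R\<^sup>*\<^sup>* b y"
        unfolding ancestors_def by auto
      then consider "w = y" | "R w y"
        by blast
      then show False
      proof cases
        case 1
        then show False
          using not_ba w_a b_y unfolding ancestors_def by (blast intro: rtranclp_trans)
      next
        case 2
        moreover have "R\<^sup>*\<^sup>* a b"
          using True by (simp add: ancestors_def)
        ultimately show False
          using \<open>shortcut_free R\<close> w_a b_y \<open>a \<noteq> b\<close> assms(5)
          unfolding shortcut_free_def by blast
      qed
    qed
    moreover have "a \<in> ?A"
      using a_a unfolding ancestors_def by blast
    ultimately have "filter (\<lambda>z. z = a \<or> z = b) (piece V h ?A (ancestors R {a})) = [a, a, b, b]"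
      using a_a not_ba unfolding filter_pair_piece[OF assms(1-4)] by simp
    then show ?thesis
      by (simp add: vertex_block_def Let_def successively_append_iff)
  next
    case False
    have "b \<in> ancestors R {b}"
      by (simp add: ancestors_def)
    with False have "filter (\<lambda>z. z = a \<or> z = b) (piece V h UNIV (ancestors R {b})) = [a, b, b, a]"
      unfolding filter_pair_piece[OF assms(1-4)] by simp
    then show ?thesis
      by (simp add: vertex_block_def Let_def successively_append_iff)
  qed
qed

definition representing_word ::
  "'a::linorder set \<Rightarrow> ('a \<Rightarrow> 'b::linorder) \<Rightarrow> ('a \<Rightarrow> 'a \<Rightarrow> bool) \<Rightarrow> 'a list" where
  "representing_word V h E =
     concat (map (vertex_block V h (colour_orientation E h)) (sorted_list_of_set V))"

lemma set_representing_word: "finite V \<Longrightarrow> set (representing_word V h E) = V"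
  by (cases "V = {}") (auto simp: representing_word_def vertex_block_def Let_def set_piece)

lemma adjacent_iff_alternate_representing_word:
  assumes "finite V" "u \<in> V" "v \<in> V" "(h u, u) < (h v, v)"
    and proper: "\<And>u v. E u v \<Longrightarrow> h u \<noteq> h v" and "shortcut_free (colour_orientation E h)"
  shows "E u v \<longleftrightarrow> alternate u v (representing_word V h E)"
proof -
  let ?R = "colour_orientation E h"
  let ?P = "\<lambda>z. z = u \<or> z = v"
  have restrict: "filter ?P (representing_word V h E) =
      concat (map (\<lambda>x. filter ?P (vertex_block V h ?R x)) (sorted_list_of_set V))"
    by (simp add: representing_word_def filter_concat comp_def)
  have "u \<noteq> v"
    using assms(4) by auto
  show ?thesis
  proof
    assume "E u v"
    then have "?R u v"
      using proper[OF \<open>E u v\<close>] assms(4) by (auto simp: colour_orientation_def less_le)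
    then have "filter ?P (representing_word V h E) =
        concat (map (\<lambda>_. [u, v, u, v, u, v, u, v]) (sorted_list_of_set V))"
      unfolding restrict using filter_pair_vertex_block_arc[OF assms(1-4)] by simp
    then show "alternate u v (representing_word V h E)"
      unfolding alternate_iff_successively
      using \<open>u \<noteq> v\<close> by (auto intro: successively_concat_map_const)
  next
    assume "alternate u v (representing_word V h E)"
    then have "successively (\<noteq>) (filter ?P (vertex_block V h ?R x))" if "x \<in> V" for x
      using that assms(1) unfolding alternate_iff_successively restrict
      by (auto intro: successively_concat_member)
    then show "E u v"
      using not_successively_vertex_block[OF assms(1-4), of ?R] assms(2,3,6)
      by (auto simp: colour_orientation_def)
  qed
qed

theorem word_representable_if_shortcut_free:
  fixes V :: "'a::linorder set" and h :: "'a \<Rightarrow> 'b::linorder"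
  assumes "finite V" and "symp E" and "\<And>u v. E u v \<Longrightarrow> h u \<noteq> h v"
    and "shortcut_free (colour_orientation E h)"
  shows "word_representable V E"
  unfolding word_representable_def
proof (intro exI conjI ballI impI)
  show "set (representing_word V h E) = V"
    using assms(1) by (rule set_representing_word)
  fix u v
  assume "u \<in> V" "v \<in> V" "u \<noteq> v"
  then consider "(h u, u) < (h v, v)" | "(h v, v) < (h u, u)"
    by (metis linorder_neqE prod.inject)
  then show "E u v \<longleftrightarrow> alternate u v (representing_word V h E)"
  proof cases
    case 1
    then show ?thesis
      using adjacent_iff_alternate_representing_word[OF assms(1) \<open>u \<in> V\<close> \<open>v \<in> V\<close> _ assms(3,4)]
      by blast
  next
    case 2
    then show ?thesis
      using adjacent_iff_alternate_representing_word[OF assms(1) \<open>v \<in> V\<close> \<open>u \<in> V\<close> _ assms(3,4)]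
        alternate_commute \<open>symp E\<close> by (metis sympD)
  qed
qed

lemma shortcut_free_four_colours:
  fixes h :: "'a \<Rightarrow> nat"
  assumes colours: "\<And>u. h u < 4"
    and no_chord: "\<And>x0 x1 x2 x3. colour_orientation E h x0 x1 \<Longrightarrow> colour_orientation E h x1 x2 \<Longrightarrow>
      colour_orientation E h x2 x3 \<Longrightarrow> \<not> E x0 x3"
  shows "shortcut_free (colour_orientation E h)"
  unfolding shortcut_free_def
proof (intro allI impI)
  let ?R = "colour_orientation E h"
  have increasing: "h u < h v" if "?R u v" for u v
    using that by (simp add: colour_orientation_def)
  have reach: "u = v \<or> h u < h v" if "?R\<^sup>*\<^sup>* u v" for u v
    using rtranclp_increasing[of ?R h] increasing that by blast
  fix w a b v
  assume wa: "?R\<^sup>*\<^sup>* w a" and ab: "?R\<^sup>*\<^sup>* a b" and bv: "?R\<^sup>*\<^sup>* b v" and wv: "?R w v"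
  show "a = b \<or> ?R a b"
  proof (rule ccontr)
    assume "\<not> (a = b \<or> ?R a b)"
    then have "a \<noteq> b" and "\<not> ?R a b"
      by auto
    obtain p where ap: "?R a p" and pb: "?R\<^sup>*\<^sup>* p b"
      using ab \<open>a \<noteq> b\<close> by (blast elim: converse_rtranclpE)
    with \<open>\<not> ?R a b\<close> have "p \<noteq> b"
      by auto
    then obtain q where pq: "?R p q" and qb: "?R\<^sup>*\<^sup>* q b"
      using pb by (blast elim: converse_rtranclpE)
    show False
    proof (cases "w = a")
      case True
      with wv \<open>\<not> ?R a b\<close> have "b \<noteq> v"
        by auto
      then obtain s where bs: "?R b s" and sv: "?R\<^sup>*\<^sup>* s v"
        using bv by (blast elim: converse_rtranclpE)
      have "q = b" and "s = v"
        using reach[OF qb] reach[OF sv] increasing[OF ap] increasing[OF pq] increasing[OF bs]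
          colours[of v] by auto
      with pq bs have "\<not> E a v"
        using no_chord[OF ap] by blast
      with wv True show False
        by (simp add: colour_orientation_def)
    next
      case False
      then obtain r where wr: "?R w r" and ra: "?R\<^sup>*\<^sup>* r a"
        using wa by (blast elim: converse_rtranclpE)
      have "r = a" and "q = v"
        using reach[OF ra] reach[OF rtranclp_trans[OF qb bv]] increasing[OF wr] increasing[OF ap]
          increasing[OF pq] colours[of v] by auto
      with ap pq have "\<not> E w v"
        using no_chord[OF wr] by blast
      with wv show False
        by (simp add: colour_orientation_def)
    qed
  qed
qed

lemma symp_circulant_adj: "symp (circulant_adj m R)"
  unfolding symp_def circulant_adj_def circ_dist_def by auto

(* Residues mod 3 alone are not proper: the adjacent vertices 0 and 2n-1 are both divisible
   by 3. *)
definition circulant_colouring :: "nat \<Rightarrow> nat \<Rightarrow> nat" where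
  "circulant_colouring n i = (if i = 2 * n - 1 then 3 else i mod 3)"

lemma circulant_colouring_less: "circulant_colouring n i < 4"
  unfolding circulant_colouring_def by presburger

context
  fixes n x :: nat
  assumes jumps: "1 < x" "x < n" and residues: "n mod 3 = 2" "x mod 3 = 2"
begin

lemma circulant_adj_iff:
  "circulant_adj (2 * n) {1, x, n} u v \<longleftrightarrow> u < 2 * n \<and> v < 2 * n \<and>
    (v = u + 1 \<or> u = v + 1 \<or> v = u + x \<or> u = v + x \<or> v = u + n \<or> u = v + n \<or>
     v + 1 = u + 2 * n \<or> u + 1 = v + 2 * n \<or> v + x = u + 2 * n \<or> u + x = v + 2 * n)"
  using jumps unfolding circulant_adj_def circ_dist_def Let_def min_def
  by (auto split: if_splits)

lemma jumps_mod_3: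
  obtains a b where "n = 3 * a + 2" and "x = 3 * b + 2" and "b < a"
proof -
  have "n = 3 * (n div 3) + 2" "x = 3 * (x div 3) + 2"
    using residues by presburger+
  moreover from this have "x div 3 < n div 3"
    using jumps(2) by linarith
  ultimately show ?thesis
    using that by blast
qed

lemma circulant_adj_residues:
  assumes "circulant_adj (2 * n) {1, x, n} u v" "u \<noteq> 2 * n - 1" "v \<noteq> 2 * n - 1"
  shows "u mod 3 \<noteq> v mod 3"
proof -
  have wrap: "(2 * n - x) mod 3 \<noteq> 0"
    using jumps residues by presburger
  have "\<exists>d. d mod 3 \<noteq> 0 \<and> (v = u + d \<or> u = v + d)"
    using assms(1) unfolding circulant_adj_iff
  proof (elim conjE disjE)
    assume "v + x = u + 2 * n"
    with wrap jumps show ?thesis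
      by (intro exI[of _ "2 * n - x"]) auto
  next
    assume "u + x = v + 2 * n"
    with wrap jumps show ?thesis
      by (intro exI[of _ "2 * n - x"]) auto
  next
    assume "v + 1 = u + 2 * n" "v < 2 * n"
    with assms(3) show ?thesis
      by linarith
  next
    assume "u + 1 = v + 2 * n" "u < 2 * n"
    with assms(2) show ?thesis
      by linarith
  qed (use residues in force)+
  then show ?thesis
    by (elim exE conjE disjE) presburger+
qed

lemma circulant_colouring_proper:
  assumes "circulant_adj (2 * n) {1, x, n} u v"
  shows "circulant_colouring n u \<noteq> circulant_colouring n v"
proof -
  have "u \<noteq> v"
    using assms by (simp add: circulant_adj_def)
  then show ?thesis
    using circulant_adj_residues[OF assms] by (auto simp: circulant_colouring_def)
qed

lemma residue_0_neighbour_of_last: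
  assumes "circulant_adj (2 * n) {1, x, n} w (2 * n - 1)" "w mod 3 = 0"
  shows "w = 0"
proof -
  obtain a b where n: "n = 3 * a + 2" and x: "x = 3 * b + 2" and "b < a"
    by (rule jumps_mod_3)
  have "w = 3 * (w div 3)"
    using assms(2) by presburger
  then obtain c where w: "w = 3 * c"
    by blast
  have last: "2 * n - 1 = 6 * a + 3"
    using n by simp
  show ?thesis
    using assms(1) \<open>b < a\<close> unfolding circulant_adj_iff last unfolding n x w
    by (elim conjE disjE; (linarith | presburger))
qed

lemma residue_2_neighbour_of_last:
  assumes "circulant_adj (2 * n) {1, x, n} w (2 * n - 1)" "w mod 3 = 2"
  shows "w = 2 * n - 2"
proof -
  obtain a b where n: "n = 3 * a + 2" and x: "x = 3 * b + 2" and "b < a"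
    by (rule jumps_mod_3)
  have "w = 3 * (w div 3) + 2"
    using assms(2) by presburger
  then obtain c where w: "w = 3 * c + 2"
    by blast
  have last: "2 * n - 1 = 6 * a + 3" and second_last: "2 * n - 2 = 6 * a + 2"
    using n by simp_all
  show ?thesis
    using assms(1) \<open>b < a\<close> unfolding circulant_adj_iff last second_last unfolding n x w
    by (elim conjE disjE; (linarith | presburger))
qed

lemma residue_1_neighbour_of_second_last:
  assumes "circulant_adj (2 * n) {1, x, n} w (2 * n - 2)" "w mod 3 = 1"
  shows "w = 2 * n - 3"
proof -
  obtain a b where n: "n = 3 * a + 2" and x: "x = 3 * b + 2" and "b < a"
    by (rule jumps_mod_3)
  have "w = 3 * (w div 3) + 1"
    using assms(2) by presburger
  then obtain c where w: "w = 3 * c + 1"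
    by blast
  have second_last: "2 * n - 2 = 6 * a + 2" and third_last: "2 * n - 3 = 6 * a + 1"
    using n by simp_all
  show ?thesis
    using assms(1) \<open>b < a\<close> unfolding circulant_adj_iff second_last third_last unfolding n x w
    by (elim conjE disjE; (linarith | presburger))
qed

lemma not_circulant_adj_0_third_last: "\<not> circulant_adj (2 * n) {1, x, n} 0 (2 * n - 3)"
proof -
  obtain a b where n: "n = 3 * a + 2" and x: "x = 3 * b + 2" and "b < a"
    by (rule jumps_mod_3)
  have third_last: "2 * n - 3 = 6 * a + 1"
    using n by simp
  show ?thesis
    using \<open>b < a\<close> unfolding circulant_adj_iff third_last unfolding n x
    by presburger
qed

lemma circulant_no_chorded_path:
  fixes x0 x1 x2 x3 :: nat
  defines "R \<equiv> colour_orientation (circulant_adj (2 * n) {1, x, n}) (circulant_colouring n)"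
  assumes "R x0 x1" "R x1 x2" "R x2 x3"
  shows "\<not> circulant_adj (2 * n) {1, x, n} x0 x3"
proof
  assume chord: "circulant_adj (2 * n) {1, x, n} x0 x3"
  have "circulant_colouring n x0 = 0" "circulant_colouring n x1 = 1"
    "circulant_colouring n x2 = 2" "circulant_colouring n x3 = 3"
    using assms(2-4) circulant_colouring_less[of n x3]
    unfolding R_def colour_orientation_def by auto
  then have x3: "x3 = 2 * n - 1" and "x2 mod 3 = 2" "x1 mod 3 = 1" "x0 mod 3 = 0"
    unfolding circulant_colouring_def by (auto split: if_splits)
  have x2: "x2 = 2 * n - 2"
    using assms(4) x3 \<open>x2 mod 3 = 2\<close> unfolding R_def colour_orientation_def
    by (auto intro: residue_2_neighbour_of_last)
  have "x1 = 2 * n - 3"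
    using assms(3) x2 \<open>x1 mod 3 = 1\<close> unfolding R_def colour_orientation_def
    by (auto intro: residue_1_neighbour_of_second_last)
  moreover have "x0 = 0"
    using chord x3 \<open>x0 mod 3 = 0\<close> by (auto intro: residue_0_neighbour_of_last)
  ultimately show False
    using assms(2) not_circulant_adj_0_third_last unfolding R_def colour_orientation_def
    by simp
qed

end

theorem theorem21:
  fixes n x :: nat
  assumes "1 < x" and "x < n"
    and "n mod 3 = 2" and "x mod 3 = 2"
  shows "word_representable {0..<2*n} (circulant_adj (2*n) {1, x, n})"
proof (rule word_representable_if_shortcut_free)
  show "finite {0..<2 * n}"
    by simp
  show "symp (circulant_adj (2 * n) {1, x, n})"
    by (rule symp_circulant_adj)
  show "circulant_colouring n u \<noteq> circulant_colouring n v"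
    if "circulant_adj (2 * n) {1, x, n} u v" for u v
    using assms that by (rule circulant_colouring_proper)
  show "shortcut_free (colour_orientation (circulant_adj (2 * n) {1, x, n}) (circulant_colouring n))"
    using circulant_colouring_less circulant_no_chorded_path[OF assms]
    by (rule shortcut_free_four_colours)
qed

end
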